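(* Let $d\geq3$ and let $x_1,\dots,x_{d-1}$ be real numbers with $0<x_i<1$ for all $i$ and $x_i\neq x_j$ for at least one pair $(i,j)$. Let $\Omega$ be the quantum channel on $d\times d$ matrices with Kraus operators $A_0,\dots,A_{d-1}$ given by $A_0=\mathrm{diag}(1,x_1,\dots,x_{d-1})$ and, for $m=1,\dots,d-1$, $(A_m)_{ij}=\sqrt{1-x_m^2}\,\delta_{0i}\delta_{mj}$ ($i,j=0,\dots,d-1$), i.e. $\Omega(X)=\sum_{m=0}^{d-1}A_mXA_m^\dagger$. Let $|\Phi^+\rangle=\frac1{\sqrt d}\sum_{i=0}^{d-1}|ii\rangle$ and $\rho_{\Phi^+,\Omega}=(\mathcal{I}\otimes\Omega)(|\Phi^+\rangle\langle\Phi^+|)$. Then $$\lambda_{\max}(\rho_{\Phi^+,\Omega})>\frac{1+2\mathcal{N}(\rho_{\Phi^+,\Omega})}{d},$$ where $\lambda_{\max}$ is the largest eigenvalue and $\mathcal{N}$ is the negativity.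
   Context: The negativity $\mathcal{N}(\sigma)$ of a two-qudit state $\sigma$ is the absolute value of the sum of the negative eigenvalues of its partial transpose $\sigma^\Gamma$ (transpose with respect to one subsystem). *)

theory Defs
  imports "Jordan_Normal_Form.Jordan_Normal_Form" "Jordan_Normal_Form.Schur_Decomposition"
begin

text \<open>Bipartite index convention: basis vector |i,j> of C^d (x) C^d has index i*d+j.\<close>

text \<open>Kraus operators A_0,...,A_{d-1} of the channel Omega (x is indexed 1..d-1).\<close>
definition kraus :: "nat \<Rightarrow> (nat \<Rightarrow> real) \<Rightarrow> nat \<Rightarrow> complex mat" where
  "kraus d x m =
     (if m = 0 then mat d d (\<lambda>(i,j). if i = j then (if i = 0 then 1 else complex_of_real (x i)) else 0)
      else mat d d (\<lambda>(i,j). if i = 0 \<and> j = m then complex_of_real (sqrt (1 - (x m)^2)) else 0))"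

definition channel :: "nat \<Rightarrow> (nat \<Rightarrow> real) \<Rightarrow> complex mat \<Rightarrow> complex mat" where
  "channel d x X = foldr (\<lambda>m acc. kraus d x m * X * mat_adjoint (kraus d x m) + acc) [0..<d] (0\<^sub>m d d)"

definition block :: "nat \<Rightarrow> complex mat \<Rightarrow> nat \<Rightarrow> nat \<Rightarrow> complex mat" where
  "block d R i k = mat d d (\<lambda>(a,b). R $$ (i*d + a, k*d + b))"

definition id_tensor :: "nat \<Rightarrow> (complex mat \<Rightarrow> complex mat) \<Rightarrow> complex mat \<Rightarrow> complex mat" where
  "id_tensor d \<Phi> R = mat (d*d) (d*d) (\<lambda>(r,s). (\<Phi> (block d R (r div d) (s div d))) $$ (r mod d, s mod d))"

definition phi_plus :: "nat \<Rightarrow> complex vec" where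
  "phi_plus d = vec (d*d) (\<lambda>r. if r div d = r mod d then complex_of_real (1 / sqrt (real d)) else 0)"

definition proj :: "complex vec \<Rightarrow> complex mat" where
  "proj v = mat (dim_vec v) (dim_vec v) (\<lambda>(r,s). v $ r * cnj (v $ s))"

definition rho_state :: "nat \<Rightarrow> (nat \<Rightarrow> real) \<Rightarrow> complex mat" where
  "rho_state d x = id_tensor d (channel d x) (proj (phi_plus d))"

text \<open>Partial transpose with respect to the second subsystem.\<close>
definition partial_transpose :: "nat \<Rightarrow> complex mat \<Rightarrow> complex mat" where
  "partial_transpose d R = mat (d*d) (d*d) (\<lambda>(r,s). R $$ ((r div d)*d + s mod d, (s div d)*d + r mod d))"

definition lambda_max :: "complex mat \<Rightarrow> real" where
  "lambda_max A = Max {t. eigenvalue A (complex_of_real t)}"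

text \<open>Negativity: absolute value of the sum of the negative eigenvalues of the partial transpose,
  counted with (algebraic) multiplicity.\<close>
definition negativity :: "nat \<Rightarrow> complex mat \<Rightarrow> real" where
  "negativity d \<sigma> = (let P = partial_transpose d \<sigma> in
     \<bar>\<Sum>t\<in>{t. t < 0 \<and> eigenvalue P (complex_of_real t)}.
        real (Polynomial.order (complex_of_real t) (char_poly P)) * t\<bar>)"

end

theory Submission
  imports Defs
begin

(* Write x\<^sub>0 = 1. The partial transpose of \<rho> is block diagonal: it acts on each |cc\<rangle>
   by x\<^sub>c\<^sup>2/d, and on each span {|ce\<rangle>, |ec\<rangle>} with c < e by a 2 \<times> 2 block with eigenvalues
   1/d and -x\<^sub>e\<^sup>2/d if c = 0, and x\<^sub>c x\<^sub>e/d and -x\<^sub>c x\<^sub>e/d otherwise. So the negativity is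
   (S + P)/d with S = \<Sum> x\<^sub>i\<^sup>2 and P = \<Sum> x\<^sub>i x\<^sub>j over 1 \<le> i < j \<le> d - 1. On the other hand
   \<Sum> x\<^sub>i |ii\<rangle> is an eigenvector of \<rho> with eigenvalue (1 + S)/d, and (1 + S)/d exceeds
   (1 + 2(S + P)/d)/d because d S - 2(S + P) = \<Sum> (x\<^sub>i - x\<^sub>j)\<^sup>2 over i < j, which is
   positive as soon as two of the x\<^sub>i differ. *)

lemma dim_row_mat_adjoint[simp]: "dim_row (mat_adjoint A) = dim_col A"
  and dim_col_mat_adjoint[simp]: "dim_col (mat_adjoint A) = dim_row A"
  by (simp_all add: mat_adjoint_def)

lemma index_mat_adjoint:
  "i < dim_col A \<Longrightarrow> j < dim_row A \<Longrightarrow> mat_adjoint A $$ (i,j) = conjugate (A $$ (j,i))"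
  by (simp add: mat_adjoint_def mat_of_rows_def)

definition single_entry_mat :: "nat \<Rightarrow> nat \<Rightarrow> nat \<Rightarrow> 'a::zero \<Rightarrow> 'a mat" where
  "single_entry_mat n i k c = mat n n (\<lambda>(p,q). if p = i \<and> q = k then c else 0)"

lemma dim_row_single_entry_mat[simp]: "dim_row (single_entry_mat n i k c) = n"
  and dim_col_single_entry_mat[simp]: "dim_col (single_entry_mat n i k c) = n"
  by (simp_all add: single_entry_mat_def)

lemma sandwich_single_entry_mat_index:
  fixes A :: "complex mat"
  assumes A: "A \<in> carrier_mat n n" and "i < n" "k < n" "a < n" "b < n"
  shows "(A * single_entry_mat n i k c * mat_adjoint A) $$ (a,b) = A $$ (a,i) * c * cnj (A $$ (b,k))"
proof -
  have AX: "(A * single_entry_mat n i k c) $$ (a,q) = (if q = k then A $$ (a,i) * c else 0)" if "q < n" for q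
    using assms that
    by (simp add: single_entry_mat_def scalar_prod_def row_def col_def
        if_distrib[of "\<lambda>z. _ * z"] sum.delta cong: if_cong)
  have "(A * single_entry_mat n i k c * mat_adjoint A) $$ (a,b)
      = (\<Sum>q<n. (A * single_entry_mat n i k c) $$ (a,q) * cnj (A $$ (b,q)))"
    using assms by (auto simp: scalar_prod_def index_mat_adjoint atLeast0LessThan intro!: sum.cong)
  also have "\<dots> = A $$ (a,i) * c * cnj (A $$ (b,k))"
    using \<open>k < n\<close> by (simp add: AX if_distrib[of "\<lambda>z. z * _"] sum.delta cong: if_cong)
  finally show ?thesis .
qed

lemma foldr_add_mat:
  assumes "\<And>m. F m \<in> carrier_mat n n" and "a < n" "b < n"
  shows "foldr (\<lambda>m acc. F m + acc) ms (0\<^sub>m n n) \<in> carrier_mat n n"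
    and "foldr (\<lambda>m acc. F m + acc) ms (0\<^sub>m n n) $$ (a,b) = (\<Sum>m\<leftarrow>ms. F m $$ (a,b))"
  using assms by (induction ms) auto

lemma index_mult_mat_two_entry_row:
  assumes A: "A \<in> carrier_mat n n" and B: "B \<in> carrier_mat n m"
    and "r < n" "t < m" "\<sigma> < n"
    and row: "\<And>u. u < n \<Longrightarrow> A $$ (r,u) = (if u = r then f else 0) + (if u = \<sigma> then g else 0)"
  shows "(A * B) $$ (r,t) = f * B $$ (r,t) + g * B $$ (\<sigma>,t)"
proof -
  have "(A * B) $$ (r,t) = (\<Sum>u\<in>{0..<n}. A $$ (r,u) * B $$ (u,t))"
    using assms by (simp add: scalar_prod_def)
  also have "\<dots> = (\<Sum>u\<in>{0..<n}. (if u = r then f * B $$ (u,t) else 0) + (if u = \<sigma> then g * B $$ (u,t) else 0))"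
    by (intro sum.cong) (simp_all add: row distrib_right)
  also have "\<dots> = f * B $$ (r,t) + g * B $$ (\<sigma>,t)"
    using assms by (simp add: sum.distrib sum.delta')
  finally show ?thesis .
qed

lemma char_poly_diagonalized:
  fixes A :: "'a::field mat"
  assumes A: "A \<in> carrier_mat n n" and Q: "Q \<in> carrier_mat n n" and Q': "Q' \<in> carrier_mat n n"
    and inv: "Q' * Q = 1\<^sub>m n"
    and eig: "A * Q = Q * mat n n (\<lambda>(i,j). if i = j then \<mu> i else 0)"
  shows "char_poly A = (\<Prod>i\<leftarrow>[0..<n]. [:- \<mu> i, 1:])"
proof -
  let ?D = "mat n n (\<lambda>(i,j). if i = j then \<mu> i else 0)"
  have D: "?D \<in> carrier_mat n n" by simp
  have inv': "Q * Q' = 1\<^sub>m n"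
    by (rule mat_mult_left_right_inverse[OF Q' Q inv])
  have "A = A * (Q * Q')" using A inv' by simp
  also have "\<dots> = A * Q * Q'" by (rule assoc_mult_mat[symmetric, OF A Q Q'])
  finally have A_eq: "A = Q * ?D * Q'" by (simp only: eig)
  have "similar_mat A ?D"
    by (intro similar_matI[where P = Q and Q = Q' and n = n] inv' inv A_eq) (use A Q Q' D in auto)
  then have "char_poly A = char_poly ?D"
    by (rule char_poly_similar)
  also have "\<dots> = (\<Prod>a\<leftarrow>diag_mat ?D. [:- a, 1:])"
    by (rule char_poly_upper_triangular[OF D]) (simp add: upper_triangular_def)
  also have "diag_mat ?D = map \<mu> [0..<n]"
    by (auto simp: diag_mat_def intro!: nth_equalityI)
  finally show ?thesis by (simp add: comp_def)
qed

lemma sum_real_eigenvalues_with_order: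
  fixes A :: "complex mat" and \<mu> :: "nat \<Rightarrow> real"
  assumes A: "A \<in> carrier_mat n n"
    and cp: "char_poly A = (\<Prod>i\<leftarrow>[0..<n]. [:- complex_of_real (\<mu> i), 1:])"
  shows "(\<Sum>t\<in>{t. P t \<and> eigenvalue A (complex_of_real t)}.
            real (Polynomial.order (complex_of_real t) (char_poly A)) * t)
       = (\<Sum>i\<in>{i. i < n \<and> P (\<mu> i)}. \<mu> i)"
proof -
  let ?I = "{i. i < n \<and> P (\<mu> i)}"
  have eigenvalue_iff: "eigenvalue A (complex_of_real t) \<longleftrightarrow> (\<exists>i<n. \<mu> i = t)" for t
    unfolding eigenvalue_root_char_poly[OF A] cp poly_prod_list_zero_iff by auto
  have order_eq: "Polynomial.order (complex_of_real t) (char_poly A) = card {i\<in>?I. \<mu> i = t}"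
    if "P t" for t
  proof -
    have "Polynomial.order (complex_of_real t) (char_poly A) = (\<Sum>i\<in>{0..<n}. if \<mu> i = t then 1 else 0)"
      unfolding cp
      by (subst order_prod_list) (auto simp: order_linear' sum_set_upt_conv_sum_list_nat[symmetric] o_def)
    also have "\<dots> = card ({0..<n} \<inter> {i. \<mu> i = t})"
      by (simp add: sum.If_cases)
    also have "{0..<n} \<inter> {i. \<mu> i = t} = {i\<in>?I. \<mu> i = t}"
      using that by auto
    finally show ?thesis .
  qed
  have eigenvalues: "{t. P t \<and> eigenvalue A (complex_of_real t)} = \<mu> ` ?I"
    unfolding eigenvalue_iff by auto
  have "(\<Sum>t\<in>{t. P t \<and> eigenvalue A (complex_of_real t)}. real (Polynomial.order (complex_of_real t) (char_poly A)) * t)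
      = (\<Sum>t\<in>\<mu> ` ?I. \<Sum>i\<in>{i\<in>?I. \<mu> i = t}. \<mu> i)"
    unfolding eigenvalues by (intro sum.cong refl) (auto simp: order_eq)
  also have "\<dots> = (\<Sum>i\<in>?I. \<mu> i)"
    by (rule sum.image_gen[symmetric]) simp
  finally show ?thesis .
qed

lemma lambda_max_ge_eigenvalue:
  assumes A: "A \<in> carrier_mat n n" and "eigenvalue A (complex_of_real t)"
  shows "t \<le> lambda_max A"
proof -
  have "char_poly A \<noteq> 0"
    using degree_monic_char_poly[OF A] by auto
  then have "finite {z. poly (char_poly A) z = 0}"
    by (rule poly_roots_finite)
  then have "finite (complex_of_real -` {z. poly (char_poly A) z = 0})"
    by (rule finite_vimageI) (simp add: inj_def)
  then have "finite {t. eigenvalue A (complex_of_real t)}"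
    by (simp add: eigenvalue_root_char_poly[OF A])
  then show ?thesis
    unfolding lambda_max_def using assms(2) by (intro Max_ge) auto
qed

lemma pair_index_less: "i < d \<Longrightarrow> p < d \<Longrightarrow> i*d + p < (d::nat)*d"
proof -
  assume "i < d" "p < d"
  then have "i*d + p < (i+1)*d" by simp
  also have "\<dots> \<le> d*d" using \<open>i < d\<close> by (intro mult_le_mono1) simp
  finally show ?thesis .
qed

lemma pair_index_components_less: "r < (d::nat)*d \<Longrightarrow> r div d < d \<and> r mod d < d"
  by (cases "d = 0") (auto simp: less_mult_imp_div_less)

lemma pair_index_eq_iff: "(s::nat) = r \<longleftrightarrow> s div d = r div d \<and> s mod d = r mod d"
  by (metis div_mult_mod_eq)

lemma sum_div_mod_eq_double_sum:
  fixes m d :: nat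
  shows "(\<Sum>s\<in>{0..<m*d}. f (s div d) (s mod d)) = (\<Sum>c\<in>{0..<m}. \<Sum>e\<in>{0..<d}. f c e)"
proof (induction m)
  case (Suc m)
  have "(\<Sum>s\<in>{0..<Suc m * d}. f (s div d) (s mod d))
      = (\<Sum>s\<in>{0..<m*d}. f (s div d) (s mod d)) + (\<Sum>s\<in>{m*d..<m*d+d}. f (s div d) (s mod d))"
    by (simp add: add.commute sum.atLeastLessThan_concat)
  also have "(\<Sum>s\<in>{m*d..<m*d+d}. f (s div d) (s mod d)) = (\<Sum>e\<in>{0..<d}. f m e)"
    using sum.shift_bounds_nat_ivl[of "\<lambda>s. f (s div d) (s mod d)" 0 "m*d" d]
    by (simp add: add.commute)
  finally show ?case using Suc by simp
qed simp

definition swap_index :: "nat \<Rightarrow> nat \<Rightarrow> nat" where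
  "swap_index d r = (r mod d) * d + r div d"

lemma swap_index_less: "r < d*d \<Longrightarrow> swap_index d r < d*d"
  and div_swap_index: "r < d*d \<Longrightarrow> swap_index d r div d = r mod d"
  and mod_swap_index: "r < d*d \<Longrightarrow> swap_index d r mod d = r div d"
  using pair_index_components_less[of r d] by (auto simp: swap_index_def pair_index_less)

definition kraus_diag :: "(nat \<Rightarrow> real) \<Rightarrow> nat \<Rightarrow> real" where
  "kraus_diag x i = (if i = 0 then 1 else x i)"

lemma dim_row_kraus[simp]: "dim_row (kraus d x m) = d"
  and dim_col_kraus[simp]: "dim_col (kraus d x m) = d"
  by (simp_all add: kraus_def)

lemma kraus_index:
  "a < d \<Longrightarrow> i < d \<Longrightarrow> kraus d x m $$ (a,i) =
     (if m = 0 then (if a = i then complex_of_real (kraus_diag x a) else 0)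
      else if a = 0 \<and> i = m then complex_of_real (sqrt (1 - (x m)^2)) else 0)"
  by (auto simp: kraus_def kraus_diag_def)

lemma kraus_sandwich_coeff:
  assumes "0 < m" "(x m)^2 \<le> 1" "a < d" "b < d" "i < d" "k < d"
  shows "kraus d x m $$ (a,i) * c * cnj (kraus d x m $$ (b,k))
    = (if m = i \<and> a = 0 \<and> b = 0 \<and> k = i then complex_of_real (1 - (x m)^2) * c else 0)"
proof -
  have "sqrt (1 - (x m)^2) * sqrt (1 - (x m)^2) = 1 - (x m)^2"
    using assms(2) by simp
  then have "complex_of_real (sqrt (1 - (x m)^2)) * c * cnj (complex_of_real (sqrt (1 - (x m)^2)))
      = complex_of_real (1 - (x m)^2) * c"
    by (metis complex_cnj_complex_of_real mult.commute mult.left_commute of_real_mult)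
  then show ?thesis
    using assms by (auto simp: kraus_index)
qed

lemma channel_single_entry_mat_index:
  assumes x: "\<forall>m\<in>{1..<d}. (x m)^2 \<le> 1" and "i < d" "k < d" "a < d" "b < d"
  shows "channel d x (single_entry_mat d i k c) $$ (a,b) =
     (if a = i \<and> b = k then complex_of_real (kraus_diag x i * kraus_diag x k) * c else 0) +
     (if a = 0 \<and> b = 0 \<and> i = k \<and> i \<noteq> 0 then complex_of_real (1 - (x i)^2) * c else 0)"
proof -
  let ?A = "kraus d x" and ?X = "single_entry_mat d i k c"
  let ?t = "\<lambda>m. ?A m $$ (a,i) * c * cnj (?A m $$ (b,k))"
  have "?A m * ?X * mat_adjoint (?A m) \<in> carrier_mat d d" for m
    by (intro carrier_matI) auto
  then have "channel d x ?X $$ (a,b) = (\<Sum>m\<leftarrow>[0..<d]. (?A m * ?X * mat_adjoint (?A m)) $$ (a,b))"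
    unfolding channel_def using assms by (intro foldr_add_mat)
  also have "\<dots> = (\<Sum>m\<in>{0..<d}. ?t m)"
    unfolding sum_set_upt_conv_sum_list_nat[symmetric] set_upt
    using assms by (intro sum.cong refl sandwich_single_entry_mat_index) (auto intro: carrier_matI)
  also have "\<dots> = ?t 0 + (\<Sum>m\<in>{1..<d}. ?t m)"
    using assms by (simp add: sum.atLeast_Suc_lessThan)
  also have "(\<Sum>m\<in>{1..<d}. ?t m)
      = (\<Sum>m\<in>{1..<d}. if m = i then (if a = 0 \<and> b = 0 \<and> k = i then complex_of_real (1 - (x m)^2) * c else 0) else 0)"
    using assms by (intro sum.cong) (auto simp: kraus_sandwich_coeff)
  finally show ?thesis
    using assms by (auto simp: kraus_index)
qed

lemma block_proj_phi_plus:
  assumes "i < d" "k < d"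
  shows "block d (proj (phi_plus d)) i k = single_entry_mat d i k (complex_of_real (1 / real d))"
proof (rule eq_matI)
  fix p q assume "p < dim_row (single_entry_mat d i k (complex_of_real (1 / real d)))"
    "q < dim_col (single_entry_mat d i k (complex_of_real (1 / real d)))"
  then have "p < d" "q < d" by auto
  moreover have "i*d + p < d*d" "k*d + q < d*d"
    using assms \<open>p < d\<close> \<open>q < d\<close> by (simp_all add: pair_index_less)
  moreover have "complex_of_real (1 / sqrt (real d)) * cnj (complex_of_real (1 / sqrt (real d)))
      = complex_of_real (1 / real d)"
    by (simp flip: of_real_mult add: real_sqrt_mult[symmetric])
  ultimately show "block d (proj (phi_plus d)) i k $$ (p, q)
      = single_entry_mat d i k (complex_of_real (1 / real d)) $$ (p, q)"
    by (auto simp: block_def proj_def phi_plus_def single_entry_mat_def)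
qed (simp_all add: block_def)

(* \<rho> is the sum of |i\<rangle>\<langle>k| \<otimes> \<Omega>(|i\<rangle>\<langle>k|)/d over i, k < d: the Kraus operator A\<^sub>0 gives the
   first summand, and the A\<^sub>m with m > 0 map |i\<rangle>\<langle>i| to (1 - x\<^sub>i\<^sup>2) |0\<rangle>\<langle>0| and give the second. *)

definition rho_coeff :: "nat \<Rightarrow> (nat \<Rightarrow> real) \<Rightarrow> nat \<Rightarrow> nat \<Rightarrow> real" where
  "rho_coeff d x r s =
     (if r mod d = r div d \<and> s mod d = s div d then kraus_diag x (r div d) * kraus_diag x (s div d) / d else 0)
     + (if s = r \<and> r mod d = 0 \<and> r div d \<noteq> 0 then (1 - (x (r div d))^2) / d else 0)"

lemma rho_state_carrier: "rho_state d x \<in> carrier_mat (d*d) (d*d)"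
  by (simp add: rho_state_def id_tensor_def)

lemma rho_state_index:
  assumes x: "\<forall>m\<in>{1..<d}. (x m)^2 \<le> 1" and "r < d*d" "s < d*d"
  shows "rho_state d x $$ (r,s) = complex_of_real (rho_coeff d x r s)"
proof -
  have idx: "r div d < d" "s div d < d" "r mod d < d" "s mod d < d"
    using assms pair_index_components_less by auto
  have "(r mod d = 0 \<and> s mod d = 0 \<and> r div d = s div d \<and> r div d \<noteq> 0)
      = (s = r \<and> r mod d = 0 \<and> r div d \<noteq> 0)"
    using pair_index_eq_iff[of s r d] by auto
  then show ?thesis
    using assms idx
    by (simp add: rho_state_def id_tensor_def block_proj_phi_plus channel_single_entry_mat_index
        rho_coeff_def divide_inverse)
qed

definition sq_sum :: "(nat \<Rightarrow> real) \<Rightarrow> nat \<Rightarrow> real" where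
  "sq_sum x n = (\<Sum>c\<in>{1..<n}. (x c)^2)"

definition cross_sum :: "(nat \<Rightarrow> real) \<Rightarrow> nat \<Rightarrow> real" where
  "cross_sum x n = (\<Sum>c\<in>{1..<n}. \<Sum>e\<in>{1..<c}. x c * x e)"

lemma sum_sq_kraus_diag: "0 < d \<Longrightarrow> (\<Sum>c\<in>{0..<d}. (kraus_diag x c)^2) = 1 + sq_sum x d"
  by (simp add: sum.atLeast_Suc_lessThan sq_sum_def kraus_diag_def)

lemma rho_state_eigenvalue:
  assumes x: "\<forall>m\<in>{1..<d}. (x m)^2 \<le> 1" and "0 < d"
  shows "eigenvalue (rho_state d x) (complex_of_real ((1 + sq_sum x d) / d))"
proof -
  define w where "w s = (if s div d = s mod d then kraus_diag x (s div d) else 0)" for s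
  define v where "v = vec (d*d) (\<lambda>s. complex_of_real (w s))"
  have diag_sum: "(\<Sum>s\<in>{0..<d*d}. if s div d = s mod d then (kraus_diag x (s div d))^2 else 0)
      = 1 + sq_sum x d"
  proof -
    have "(\<Sum>s\<in>{0..<d*d}. if s div d = s mod d then (kraus_diag x (s div d))^2 else 0)
        = (\<Sum>c\<in>{0..<d}. \<Sum>e\<in>{0..<d}. if c = e then (kraus_diag x c)^2 else 0)"
      by (rule sum_div_mod_eq_double_sum)
    also have "\<dots> = (\<Sum>c\<in>{0..<d}. (kraus_diag x c)^2)"
      by (intro sum.cong) simp_all
    also have "\<dots> = 1 + sq_sum x d"
      using \<open>0 < d\<close> by (rule sum_sq_kraus_diag)
    finally show ?thesis .
  qed
  have "rho_coeff d x r s * w s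
      = (if r div d = r mod d then kraus_diag x (r div d) / d else 0)
        * (if s div d = s mod d then (kraus_diag x (s div d))^2 else 0)" for r s
    by (auto simp: rho_coeff_def w_def power2_eq_square)
  then have row_sum: "(\<Sum>s\<in>{0..<d*d}. rho_coeff d x r s * w s) = (1 + sq_sum x d) / d * w r" for r
    by (simp add: sum_distrib_left[symmetric] diag_sum w_def)
  have "rho_state d x *\<^sub>v v = complex_of_real ((1 + sq_sum x d) / d) \<cdot>\<^sub>v v"
  proof (rule eq_vecI)
    fix r assume "r < dim_vec (complex_of_real ((1 + sq_sum x d) / d) \<cdot>\<^sub>v v)"
    then have r: "r < d*d" by (simp add: v_def)
    have "(rho_state d x *\<^sub>v v) $ r = (\<Sum>s\<in>{0..<d*d}. complex_of_real (rho_coeff d x r s * w s))"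
      using r rho_state_carrier[of d x]
      by (auto simp: scalar_prod_def v_def rho_state_index[OF x] intro!: sum.cong)
    also have "\<dots> = complex_of_real ((1 + sq_sum x d) / d * w r)"
      unfolding of_real_sum[symmetric] row_sum ..
    finally show "(rho_state d x *\<^sub>v v) $ r = (complex_of_real ((1 + sq_sum x d) / d) \<cdot>\<^sub>v v) $ r"
      using r by (simp add: v_def)
  qed (use rho_state_carrier[of d x] in \<open>simp add: v_def\<close>)
  moreover have "v $ 0 = 1"
    using \<open>0 < d\<close> by (simp add: v_def w_def kraus_diag_def)
  then have "v \<noteq> 0\<^sub>v (d*d)"
    using \<open>0 < d\<close> by auto
  ultimately show ?thesis
    unfolding eigenvalue_def eigenvector_def using rho_state_carrier[of d x]
    by (intro exI[of _ v]) (auto simp: v_def)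
qed

definition pt_diag_coeff :: "nat \<Rightarrow> (nat \<Rightarrow> real) \<Rightarrow> nat \<Rightarrow> nat \<Rightarrow> real" where
  "pt_diag_coeff d x i a = (if a = 0 \<and> i \<noteq> 0 then (1 - (x i)^2) / d else 0)"

definition pt_swap_coeff :: "nat \<Rightarrow> (nat \<Rightarrow> real) \<Rightarrow> nat \<Rightarrow> nat \<Rightarrow> real" where
  "pt_swap_coeff d x i a = kraus_diag x i * kraus_diag x a / d"

lemma partial_transpose_rho_carrier: "partial_transpose d (rho_state d x) \<in> carrier_mat (d*d) (d*d)"
  by (simp add: partial_transpose_def)

lemma partial_transpose_rho_index:
  assumes x: "\<forall>m\<in>{1..<d}. (x m)^2 \<le> 1" and "r < d*d" "s < d*d"
  shows "partial_transpose d (rho_state d x) $$ (r,s) = complex_of_real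
     ((if s = r then pt_diag_coeff d x (r div d) (r mod d) else 0)
      + (if s = swap_index d r then pt_swap_coeff d x (r div d) (r mod d) else 0))"
proof -
  have idx: "r div d < d" "s div d < d" "r mod d < d" "s mod d < d"
    using assms pair_index_components_less by auto
  define r' where "r' = (r div d)*d + s mod d"
  define s' where "s' = (s div d)*d + r mod d"
  have r': "r' < d*d" "r' div d = r div d" "r' mod d = s mod d"
    using idx by (auto simp: r'_def pair_index_less)
  have s': "s' < d*d" "s' div d = s div d" "s' mod d = r mod d"
    using idx by (auto simp: s'_def pair_index_less)
  have "(s' = r') = (s = r)"
    using pair_index_eq_iff[of s' r' d] pair_index_eq_iff[of s r d] r' s' by auto
  moreover have "(s = swap_index d r) = (s mod d = r div d \<and> r mod d = s div d)"
    using pair_index_eq_iff[of s "swap_index d r" d] assms by (auto simp: div_swap_index mod_swap_index)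
  ultimately show ?thesis
    using assms r' s'
    by (auto simp: partial_transpose_def rho_state_index rho_coeff_def pt_diag_coeff_def
        pt_swap_coeff_def r'_def[symmetric] s'_def[symmetric])
qed

(* Column (c,e) of the eigenvector matrix of the partial transpose is
   eigvec_own c e |ce\<rangle> + eigvec_swap c e |ec\<rangle>. On span {|ce\<rangle>, |ec\<rangle>} this matrix is
   symmetric with square (1 + pair_coeff c e\<^sup>2) times the identity, which yields its inverse. *)

definition pair_coeff :: "(nat \<Rightarrow> real) \<Rightarrow> nat \<Rightarrow> nat \<Rightarrow> real" where
  "pair_coeff x c e = (if c = e then 0 else if min c e = 0 then x (max c e) else 1)"

definition eigvec_own :: "(nat \<Rightarrow> real) \<Rightarrow> nat \<Rightarrow> nat \<Rightarrow> real" where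
  "eigvec_own x c e =
     (if c = e then 1 else if c < e then pair_coeff x c e else - pair_coeff x c e)"

definition eigvec_swap :: "nat \<Rightarrow> nat \<Rightarrow> real" where
  "eigvec_swap c e = (if c = e then 0 else 1)"

definition eigvec_coeff :: "(nat \<Rightarrow> real) \<Rightarrow> nat \<Rightarrow> nat \<Rightarrow> nat \<Rightarrow> nat \<Rightarrow> real" where
  "eigvec_coeff x a b c e =
     (if a = c \<and> b = e then eigvec_own x c e else 0) + (if a = e \<and> b = c then eigvec_swap c e else 0)"

definition pt_eigval :: "nat \<Rightarrow> (nat \<Rightarrow> real) \<Rightarrow> nat \<Rightarrow> nat \<Rightarrow> real" where
  "pt_eigval d x c e =
     (if c = e then (kraus_diag x c)^2 / d
      else if c < e then (if c = 0 then 1 else x c * x e) / d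
      else - (if e = 0 then (x c)^2 else x c * x e) / d)"

lemma eigvec_coeff_pt_eigval:
  "pt_diag_coeff d x a b * eigvec_coeff x a b c e + pt_swap_coeff d x a b * eigvec_coeff x b a c e
     = eigvec_coeff x a b c e * pt_eigval d x c e"
proof -
  consider "c = e" | "c < e" "c = 0" | "c < e" "c \<noteq> 0" | "e < c" "e = 0" | "e < c" "e \<noteq> 0"
    by linarith
  then show ?thesis
    by cases (auto simp: eigvec_coeff_def eigvec_own_def eigvec_swap_def pair_coeff_def
        pt_diag_coeff_def pt_swap_coeff_def pt_eigval_def kraus_diag_def power2_eq_square
        add_divide_distrib[symmetric] algebra_simps)
qed

lemma eigvec_coeff_square:
  "eigvec_own x p q * eigvec_coeff x p q c e + eigvec_swap p q * eigvec_coeff x q p c e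
     = (if p = c \<and> q = e then 1 + (pair_coeff x p q)^2 else 0)"
  by (cases p q rule: linorder_cases)
    (auto simp: eigvec_coeff_def eigvec_own_def eigvec_swap_def pair_coeff_def power2_eq_square)

definition pt_eigvecs :: "nat \<Rightarrow> (nat \<Rightarrow> real) \<Rightarrow> complex mat" where
  "pt_eigvecs d x = mat (d*d) (d*d)
     (\<lambda>(u,t). complex_of_real (eigvec_coeff x (u div d) (u mod d) (t div d) (t mod d)))"

definition pt_eigvecs_inv :: "nat \<Rightarrow> (nat \<Rightarrow> real) \<Rightarrow> complex mat" where
  "pt_eigvecs_inv d x = mat (d*d) (d*d) (\<lambda>(s,u). complex_of_real
     (((if u = s then eigvec_own x (s div d) (s mod d) else 0)
       + (if u = swap_index d s then eigvec_swap (s div d) (s mod d) else 0))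
      / (1 + (pair_coeff x (s div d) (s mod d))^2)))"

definition pt_eigvals :: "nat \<Rightarrow> (nat \<Rightarrow> real) \<Rightarrow> complex mat" where
  "pt_eigvals d x = mat (d*d) (d*d)
     (\<lambda>(u,t). if u = t then complex_of_real (pt_eigval d x (u div d) (u mod d)) else 0)"

lemma pt_eigvecs_carrier: "pt_eigvecs d x \<in> carrier_mat (d*d) (d*d)"
  and pt_eigvecs_inv_carrier: "pt_eigvecs_inv d x \<in> carrier_mat (d*d) (d*d)"
  by (simp_all add: pt_eigvecs_def pt_eigvecs_inv_def)

lemma partial_transpose_rho_eigvecs:
  assumes x: "\<forall>m\<in>{1..<d}. (x m)^2 \<le> 1"
  shows "partial_transpose d (rho_state d x) * pt_eigvecs d x = pt_eigvecs d x * pt_eigvals d x"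
proof (rule eq_matI)
  fix r t assume "r < dim_row (pt_eigvecs d x * pt_eigvals d x)" "t < dim_col (pt_eigvecs d x * pt_eigvals d x)"
  then have r: "r < d*d" and t: "t < d*d" by (auto simp: pt_eigvecs_def pt_eigvals_def)
  let ?Q = "pt_eigvecs d x" and ?i = "r div d" and ?a = "r mod d"
  have "(partial_transpose d (rho_state d x) * ?Q) $$ (r,t)
      = complex_of_real (pt_diag_coeff d x ?i ?a) * ?Q $$ (r,t)
        + complex_of_real (pt_swap_coeff d x ?i ?a) * ?Q $$ (swap_index d r,t)"
    using r t by (intro index_mult_mat_two_entry_row[OF partial_transpose_rho_carrier pt_eigvecs_carrier])
      (simp_all add: partial_transpose_rho_index[OF x] swap_index_less)
  also have "\<dots> = complex_of_real (eigvec_coeff x ?i ?a (t div d) (t mod d) * pt_eigval d x (t div d) (t mod d))"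
    using r t
    by (simp add: pt_eigvecs_def swap_index_less div_swap_index mod_swap_index
        flip: eigvec_coeff_pt_eigval)
  also have "\<dots> = (?Q * pt_eigvals d x) $$ (r,t)"
    using r t
    by (simp add: pt_eigvecs_def pt_eigvals_def scalar_prod_def if_distrib[of "\<lambda>z. _ * z"]
        sum.delta' cong: if_cong)
  finally show "(partial_transpose d (rho_state d x) * ?Q) $$ (r,t) = (?Q * pt_eigvals d x) $$ (r,t)" .
qed (simp_all add: pt_eigvecs_def pt_eigvals_def partial_transpose_def)

lemma pt_eigvecs_inv_mult: "pt_eigvecs_inv d x * pt_eigvecs d x = 1\<^sub>m (d*d)"
proof (rule eq_matI)
  fix s t assume "s < dim_row (1\<^sub>m (d*d) :: complex mat)" "t < dim_col (1\<^sub>m (d*d) :: complex mat)"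
  then have s: "s < d*d" and t: "t < d*d" by auto
  let ?Q = "pt_eigvecs d x" and ?p = "s div d" and ?q = "s mod d"
  have nz: "1 + (pair_coeff x ?p ?q)^2 \<noteq> 0"
    using zero_le_power2[of "pair_coeff x ?p ?q"] by linarith
  have "(pt_eigvecs_inv d x * ?Q) $$ (s,t)
      = complex_of_real (eigvec_own x ?p ?q / (1 + (pair_coeff x ?p ?q)^2)) * ?Q $$ (s,t)
        + complex_of_real (eigvec_swap ?p ?q / (1 + (pair_coeff x ?p ?q)^2)) * ?Q $$ (swap_index d s,t)"
    using s t by (intro index_mult_mat_two_entry_row[OF pt_eigvecs_inv_carrier pt_eigvecs_carrier])
      (auto simp: pt_eigvecs_inv_def swap_index_less add_divide_distrib)
  also have "\<dots> = complex_of_real ((eigvec_own x ?p ?q * eigvec_coeff x ?p ?q (t div d) (t mod d)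
        + eigvec_swap ?p ?q * eigvec_coeff x ?q ?p (t div d) (t mod d)) / (1 + (pair_coeff x ?p ?q)^2))"
    using s t by (simp add: pt_eigvecs_def swap_index_less div_swap_index mod_swap_index add_divide_distrib)
  also have "(eigvec_own x ?p ?q * eigvec_coeff x ?p ?q (t div d) (t mod d)
        + eigvec_swap ?p ?q * eigvec_coeff x ?q ?p (t div d) (t mod d)) / (1 + (pair_coeff x ?p ?q)^2)
      = (if s = t then 1 else 0)"
    using nz pair_index_eq_iff[of s t d] by (auto simp: eigvec_coeff_square)
  also have "complex_of_real (if s = t then 1 else 0) = 1\<^sub>m (d*d) $$ (s,t)"
    using s t by simp
  finally show "(pt_eigvecs_inv d x * ?Q) $$ (s,t) = 1\<^sub>m (d*d) $$ (s,t)" .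
qed (simp_all add: pt_eigvecs_def pt_eigvecs_inv_def)

lemma char_poly_partial_transpose_rho:
  assumes "\<forall>m\<in>{1..<d}. (x m)^2 \<le> 1"
  shows "char_poly (partial_transpose d (rho_state d x))
    = (\<Prod>s\<leftarrow>[0..<d*d]. [:- complex_of_real (pt_eigval d x (s div d) (s mod d)), 1:])"
  by (rule char_poly_diagonalized[OF partial_transpose_rho_carrier pt_eigvecs_carrier
        pt_eigvecs_inv_carrier pt_eigvecs_inv_mult partial_transpose_rho_eigvecs[OF assms,
        unfolded pt_eigvals_def]])

lemma pt_eigval_neg_iff:
  assumes x: "\<forall>m\<in>{1..<d}. 0 < x m" and "c < d" "e < d" "0 < d"
  shows "pt_eigval d x c e < 0 \<longleftrightarrow> e < c"
proof -
  have "c \<noteq> 0 \<Longrightarrow> 0 < x c" "e \<noteq> 0 \<Longrightarrow> 0 < x e"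
    using assms by auto
  then show ?thesis
    using \<open>0 < d\<close>
    by (cases c e rule: linorder_cases)
      (auto simp: pt_eigval_def kraus_diag_def divide_less_0_iff mult_less_0_iff)
qed

lemma sum_negative_pt_eigvals:
  assumes x: "\<forall>m\<in>{1..<d}. 0 < x m" and "0 < d"
  shows "(\<Sum>s\<in>{s. s < d*d \<and> pt_eigval d x (s div d) (s mod d) < 0}. pt_eigval d x (s div d) (s mod d))
    = - (sq_sum x d + cross_sum x d) / d"
proof -
  have negative: "{s. s < d*d \<and> pt_eigval d x (s div d) (s mod d) < 0} = {s\<in>{0..<d*d}. s mod d < s div d}"
    using pt_eigval_neg_iff[OF assms(1) _ _ assms(2)] pair_index_components_less by auto
  have "(\<Sum>s\<in>{s. s < d*d \<and> pt_eigval d x (s div d) (s mod d) < 0}. pt_eigval d x (s div d) (s mod d))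
      = (\<Sum>s\<in>{0..<d*d}. if s mod d < s div d then pt_eigval d x (s div d) (s mod d) else 0)"
    unfolding negative by (subst sum.inter_filter) simp_all
  also have "\<dots> = (\<Sum>c\<in>{0..<d}. \<Sum>e\<in>{0..<d}. if e < c then pt_eigval d x c e else 0)"
    by (rule sum_div_mod_eq_double_sum)
  also have "\<dots> = (\<Sum>c\<in>{0..<d}. \<Sum>e\<in>{0..<c}. pt_eigval d x c e)"
  proof (rule sum.cong[OF refl])
    fix c assume "c \<in> {0..<d}"
    then have "{e\<in>{0..<d}. e < c} = {0..<c}" by auto
    then show "(\<Sum>e\<in>{0..<d}. if e < c then pt_eigval d x c e else 0) = (\<Sum>e\<in>{0..<c}. pt_eigval d x c e)"
      by (simp only: sum.inter_filter[OF finite_atLeastLessThan, symmetric])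
  qed
  also have "\<dots> = (\<Sum>c\<in>{1..<d}. \<Sum>e\<in>{0..<c}. pt_eigval d x c e)"
    using \<open>0 < d\<close> by (subst sum.atLeast_Suc_lessThan) auto
  also have "\<dots> = (\<Sum>c\<in>{1..<d}. - ((x c)^2 / d) + (\<Sum>e\<in>{1..<c}. - (x c * x e) / d))"
  proof (rule sum.cong[OF refl])
    fix c assume c: "c \<in> {1..<d}"
    then have "(\<Sum>e\<in>{0..<c}. pt_eigval d x c e) = pt_eigval d x c 0 + (\<Sum>e\<in>{1..<c}. pt_eigval d x c e)"
      by (subst sum.atLeast_Suc_lessThan) auto
    also have "(\<Sum>e\<in>{1..<c}. pt_eigval d x c e) = (\<Sum>e\<in>{1..<c}. - (x c * x e) / d)"
      by (intro sum.cong) (auto simp: pt_eigval_def)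
    finally show "(\<Sum>e\<in>{0..<c}. pt_eigval d x c e) = - ((x c)^2 / d) + (\<Sum>e\<in>{1..<c}. - (x c * x e) / d)"
      using c by (simp add: pt_eigval_def)
  qed
  also have "\<dots> = - (sq_sum x d + cross_sum x d) / d"
    by (simp add: sq_sum_def cross_sum_def sum.distrib sum_subtractf sum_negf
        sum_divide_distrib[symmetric] diff_divide_distrib add_divide_distrib)
  finally show ?thesis .
qed

lemma negativity_rho_state:
  assumes "\<forall>m\<in>{1..<d}. 0 < x m \<and> x m < 1" and "0 < d"
  shows "negativity d (rho_state d x) = (sq_sum x d + cross_sum x d) / d"
proof -
  have x_pos: "\<forall>m\<in>{1..<d}. 0 < x m" and x_sq: "\<forall>m\<in>{1..<d}. (x m)^2 \<le> 1"
    using assms by (auto simp: abs_square_le_1)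
  have "0 \<le> cross_sum x d"
    unfolding cross_sum_def using x_pos by (intro sum_nonneg mult_nonneg_nonneg) (auto intro: less_imp_le)
  then have "0 \<le> sq_sum x d + cross_sum x d"
    by (simp add: sq_sum_def sum_nonneg)
  then show ?thesis
    by (simp add: negativity_def sum_real_eigenvalues_with_order[OF partial_transpose_rho_carrier
        char_poly_partial_transpose_rho[OF x_sq]] sum_negative_pt_eigvals[OF x_pos \<open>0 < d\<close>])
qed

lemma sum_sq_diff_eq:
  assumes "1 \<le> n"
  shows "(\<Sum>c\<in>{1..<n}. \<Sum>e\<in>{1..<c}. (x c - x e)^2) = (real n - 2) * sq_sum x n - 2 * cross_sum x n"
  using assms
proof (induction n rule: dec_induct)
  case (step n)
  have "(\<Sum>e\<in>{1..<n}. (x n - x e)^2)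
      = (\<Sum>e\<in>{1..<n}. (x n)^2) - (\<Sum>e\<in>{1..<n}. 2 * x n * x e) + sq_sum x n"
    by (simp add: power2_diff sum.distrib sum_subtractf sq_sum_def)
  also have "(\<Sum>e\<in>{1..<n}. (x n)^2) = (real n - 1) * (x n)^2"
    using step(1) by (simp add: of_nat_diff)
  finally have "(\<Sum>e\<in>{1..<n}. (x n - x e)^2)
      = (real n - 1) * (x n)^2 - 2 * (\<Sum>e\<in>{1..<n}. x n * x e) + sq_sum x n"
    by (simp add: sum_distrib_left mult.assoc)
  moreover have "sq_sum x (Suc n) = sq_sum x n + (x n)^2"
    and "cross_sum x (Suc n) = cross_sum x n + (\<Sum>e\<in>{1..<n}. x n * x e)"
    using step(1) by (simp_all add: sq_sum_def cross_sum_def)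
  ultimately show ?case
    using step by (simp add: algebra_simps)
qed (simp add: sq_sum_def cross_sum_def)

lemma sum_sq_diff_pos:
  fixes x :: "nat \<Rightarrow> real"
  assumes "i \<in> {1..<n}" "j \<in> {1..<n}" "x i \<noteq> x j"
  shows "0 < (\<Sum>c\<in>{1..<n}. \<Sum>e\<in>{1..<c}. (x c - x e)^2)"
proof -
  obtain c e where ce: "c \<in> {1..<n}" "e \<in> {1..<c}" "x c \<noteq> x e"
    using assms by (cases i j rule: linorder_cases) auto
  have "0 < (x c - x e)^2" using ce by simp
  also have "\<dots> \<le> (\<Sum>e\<in>{1..<c}. (x c - x e)^2)"
    using ce by (intro member_le_sum) auto
  also have "\<dots> \<le> (\<Sum>c\<in>{1..<n}. \<Sum>e\<in>{1..<c}. (x c - x e)^2)"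
    using ce by (intro member_le_sum[where f = "\<lambda>c. \<Sum>e\<in>{1..<c}. (x c - x e)^2"]) (auto intro: sum_nonneg)
  finally show ?thesis .
qed

theorem lemma3:
  fixes d :: nat and x :: "nat \<Rightarrow> real"
  assumes "d \<ge> 3"
    and "\<forall>i\<in>{1..d-1}. 0 < x i \<and> x i < 1"
    and "\<exists>i\<in>{1..d-1}. \<exists>j\<in>{1..d-1}. x i \<noteq> x j"
  shows "lambda_max (rho_state d x) > (1 + 2 * negativity d (rho_state d x)) / real d"
proof -
  have range: "{1..d-1} = {1..<d}" and "0 < d"
    using assms(1) by auto
  have x: "\<forall>m\<in>{1..<d}. 0 < x m \<and> x m < 1"
    using assms(2) range by simp
  then have x_sq: "\<forall>m\<in>{1..<d}. (x m)^2 \<le> 1"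
    by (auto simp: abs_square_le_1)
  obtain i j where "i \<in> {1..<d}" "j \<in> {1..<d}" "x i \<noteq> x j"
    using assms(3) range by auto
  then have "2 * (sq_sum x d + cross_sum x d) < d * sq_sum x d"
    using sum_sq_diff_pos[of i d j x] sum_sq_diff_eq[of d x] \<open>0 < d\<close> by (simp add: algebra_simps)
  then have "2 * ((sq_sum x d + cross_sum x d) / d) < sq_sum x d"
    using \<open>0 < d\<close> by (simp add: divide_less_eq mult.commute)
  then have "(1 + 2 * negativity d (rho_state d x)) / d < (1 + sq_sum x d) / d"
    using \<open>0 < d\<close> by (simp add: negativity_rho_state[OF x \<open>0 < d\<close>] divide_strict_right_mono)
  also have "\<dots> \<le> lambda_max (rho_state d x)"
    by (rule lambda_max_ge_eigenvalue[OF rho_state_carrier rho_state_eigenvalue[OF x_sq \<open>0 < d\<close>]])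
  finally show ?thesis .
qed

end
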